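(* Let $\rho>\chi>1$. There exists a $\rho$-robust $\chi$-consistent (randomized) online bidding strategy if and only if there exists a $(\rho,\chi)$-bidding profile.
   Context: Online bidding: unknown target $T>0$, prediction normalized to $1$. A deterministic strategy is a bi-infinite sequence $0<\cdots<b_{-1}<b_0<b_1<\cdots$; its cost on $T$ is $\sum_{n\le n_*}b_n$ with $n_*=\min\{n:b_n\ge T\}$. A randomized strategy $B$ is a probability distribution over deterministic strategies with expected cost $\mathrm{cost}_B(T)$; it is $\chi$-consistent if $\mathrm{cost}_B(1)\le\chi$ and $\rho$-robust if $\mathrm{cost}_B(T)\le\rho T$ for all $T>0$. Given $1<\chi\le\rho$, a $(\rho,\chi)$-bidding profile is a non-decreasing, left-continuous $G:\mathbb{R}\to(0,\infty)$ with (offset) $G(x)<1$ for $x<0$ and $G(x)\ge1$ for $x>0$; (robustness) $\int_{-\infty}^{x+1}G(t)\,\mathrm{d} t\le\rho G(x)$ for all $x\in\mathbb{R}$; (consistency) $\int_{-\infty}^1 G(t)\,\mathrm{d} t\le\chi$. *)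

theory Defs
  imports "HOL-Probability.Probability"
begin

text \<open>A deterministic bidding strategy: a bi-infinite, strictly increasing sequence of
  positive bids indexed by the integers, such that for every target T > 0 the index
  n_* = min {n. b n >= T} exists (needed for the cost to be defined).\<close>
definition det_strategy :: "(int \<Rightarrow> real) \<Rightarrow> bool" where
  "det_strategy b \<longleftrightarrow> (\<forall>n. 0 < b n) \<and> strict_mono b \<and>
     (\<forall>T>0. \<exists>n. T \<le> b n \<and> (\<forall>m<n. b m < T))"

definition nstar :: "(int \<Rightarrow> real) \<Rightarrow> real \<Rightarrow> int" where
  "nstar b T = (THE n. T \<le> b n \<and> (\<forall>m<n. b m < T))"

definition det_cost :: "(int \<Rightarrow> real) \<Rightarrow> real \<Rightarrow> ennreal" where
  "det_cost b T = (\<integral>\<^sup>+ n. ennreal (b n) * indicator {..nstar b T} n \<partial>count_space UNIV)"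

definition rand_strategy :: "(int \<Rightarrow> real) measure \<Rightarrow> bool" where
  "rand_strategy B \<longleftrightarrow> prob_space B \<and>
     sets B = sets (Pi\<^sub>M UNIV (\<lambda>_. borel)) \<and> (AE b in B. det_strategy b)"

definition rand_cost :: "(int \<Rightarrow> real) measure \<Rightarrow> real \<Rightarrow> ennreal" where
  "rand_cost B T = (\<integral>\<^sup>+ b. det_cost b T \<partial>B)"

definition consistent :: "real \<Rightarrow> (int \<Rightarrow> real) measure \<Rightarrow> bool" where
  "consistent chi B \<longleftrightarrow> rand_cost B 1 \<le> ennreal chi"

definition robust :: "real \<Rightarrow> (int \<Rightarrow> real) measure \<Rightarrow> bool" where
  "robust rho B \<longleftrightarrow> (\<forall>T>0. rand_cost B T \<le> ennreal (rho * T))"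

definition bidding_profile :: "real \<Rightarrow> real \<Rightarrow> (real \<Rightarrow> real) \<Rightarrow> bool" where
  "bidding_profile rho chi G \<longleftrightarrow>
     mono G \<and> (\<forall>x. continuous (at_left x) G) \<and> (\<forall>x. 0 < G x) \<and>
     (\<forall>x<0. G x < 1) \<and> (\<forall>x>0. 1 \<le> G x) \<and>
     (\<forall>x. (\<integral>\<^sup>+ t\<in>{..x+1}. ennreal (G t) \<partial>lborel) \<le> ennreal (rho * G x)) \<and>
     (\<integral>\<^sup>+ t\<in>{..1}. ennreal (G t) \<partial>lborel) \<le> ennreal chi"

end

theory Submission
  imports Defs
begin

text \<open>
  Given a randomized strategy, let \<open>C t\<close> be the expected number of distinct bids below \<open>t\<close>,
  normalised by \<open>C 1 = 0\<close>, and let \<open>G\<close> be its left-continuous generalised inverse. A layer-cake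
  computation compares the integral of \<open>G\<close> up to \<open>C T + 1\<close> with the expected cost of reaching
  \<open>T\<close>: at every height \<open>r\<close>, the levels \<open>x\<close> with \<open>G x > r\<close> form an interval whose length is at
  most the expected number of bids above \<open>r\<close> made before \<open>T\<close> is reached. So robustness and
  consistency of the strategy become those of \<open>G\<close>, and a translation fixes the offset.

  Conversely, a profile \<open>G\<close> yields the strategy \<open>n \<mapsto> G (n + u)\<close> with \<open>u\<close> uniform on \<open>(0, 1]\<close>.
  Averaging over \<open>u\<close> turns its expected cost on target \<open>T\<close> into the integral of \<open>G\<close> up to
  \<open>a + 1\<close>, where \<open>a\<close> is the last point with \<open>G a \<le> T\<close>, and robustness bounds this by \<open>\<rho> T\<close>.
  These sequences are almost surely strictly increasing if \<open>G x < G y\<close> whenever \<open>x + 1 < y\<close>.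
  A profile with this gap property is obtained by applying the first construction to the
  strategy of an arbitrary profile: almost surely at most one bid equals a given value, so the
  expected count \<open>C\<close> jumps by at most one.
\<close>

lemma borel_measurable_nn_integral_count_space_int [measurable]:
  assumes "\<And>n. f n \<in> borel_measurable M"
  shows "(\<lambda>x. \<integral>\<^sup>+n. f n x \<partial>count_space (UNIV :: int set)) \<in> borel_measurable M"
proof -
  have "(\<integral>\<^sup>+n. f n x \<partial>count_space UNIV) = (\<Sum>k. f (int_decode k) x)" for x
    using nn_integral_bij_count_space[OF bij_int_decode, of "\<lambda>n. f n x"]
    by (simp add: nn_integral_count_space_nat)
  then show ?thesis using assms by simp
qed

lemma emeasure_count_space_eq_nn_integral:
  "emeasure (count_space UNIV) A = (\<integral>\<^sup>+n. indicator A n \<partial>count_space UNIV)"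
  by simp

lemma borel_measurable_emeasure_count_space_int [measurable]:
  assumes [measurable]: "\<And>n. Measurable.pred M (\<lambda>x. P x n)"
  shows "(\<lambda>x. emeasure (count_space (UNIV :: int set)) {n. P x n}) \<in> borel_measurable M"
  unfolding emeasure_count_space_eq_nn_integral by measurable

lemma less_enn2real_if_ennreal_less:
  assumes "ennreal a < e" "e < \<infinity>"
  shows "a < enn2real e"
proof (cases "0 \<le> a")
  case True
  have "ennreal a < ennreal (enn2real e)" using assms by simp
  with True show ?thesis by (simp add: ennreal_less_iff)
next
  case False
  then show ?thesis using enn2real_nonneg[of e] by linarith
qed

lemma (in prob_space) SUP_nn_integral_eq_top:
  assumes "incseq f" "\<And>k. f k \<in> borel_measurable M" "AE x in M. (SUP k. f k x) = \<infinity>"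
  shows "(SUP k. \<integral>\<^sup>+x. f k x \<partial>M) = \<infinity>"
proof -
  have "(SUP k. \<integral>\<^sup>+x. f k x \<partial>M) = (\<integral>\<^sup>+x. (SUP k. f k x) \<partial>M)"
    using assms(1,2) by (intro nn_integral_monotone_convergence_SUP[symmetric]) auto
  also have "\<dots> = (\<integral>\<^sup>+x. \<infinity> \<partial>M)" using assms(3) by (intro nn_integral_cong_AE) auto
  finally show ?thesis by (simp add: emeasure_space_1)
qed

lemma strict_mono_if_less_succ:
  fixes f :: "int \<Rightarrow> 'a :: order"
  assumes "\<And>n. f n < f (n + 1)"
  shows "strict_mono f"
proof (rule strict_monoI)
  fix m n :: int assume "m < n"
  then have "m + 1 \<le> n" by simp
  then show "f m < f n"
  proof (induction n rule: int_ge_induct)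
    case base
    then show ?case by (rule assms)
  next
    case (step n)
    then show ?case using assms[of n] by order
  qed
qed

lemma Inter_shrinking_windows:
  assumes "0 < c"
  shows "(\<Inter>k. {c - c / (real k + 2)..<c + c / (real k + 2)}) = {c}"
proof safe
  fix x assume x: "x \<in> (\<Inter>k. {c - c / (real k + 2)..<c + c / (real k + 2)})"
  show "x = c"
  proof (rule ccontr)
    assume "x \<noteq> c"
    then obtain k where k: "c / \<bar>x - c\<bar> < real k" using reals_Archimedean2 by blast
    have "c < real k * \<bar>x - c\<bar>" using k \<open>x \<noteq> c\<close> by (simp add: field_simps)
    also have "\<dots> \<le> (real k + 2) * \<bar>x - c\<bar>" by (intro mult_right_mono) auto
    finally have "c / (real k + 2) < \<bar>x - c\<bar>" by (simp add: field_simps)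
    moreover have "c - c / (real k + 2) \<le> x" "x < c + c / (real k + 2)" using x by auto
    ultimately show False by (simp add: abs_if split: if_split_asm)
  qed
qed (use assms in auto)

lemma continuous_at_left_shift:
  fixes f :: "real \<Rightarrow> 'a :: topological_space"
  assumes "continuous (at_left (x + a)) f"
  shows "continuous (at_left x) (\<lambda>t. f (t + a))"
proof (rule continuous_within_compose2[where f = "\<lambda>t. t + a" and g = f])
  have "(\<lambda>t. t + a) ` {..<x} = {..<x + a}"
  proof -
    have "y \<in> (\<lambda>t. t + a) ` {..<x}" if "y < x + a" for y
      using that by (intro image_eqI[of y _ "y - a"]) auto
    then show ?thesis by auto
  qed
  then show "continuous (at ((\<lambda>t. t + a) x) within (\<lambda>t. t + a) ` {..<x}) f"
    using assms by simp
qed (intro continuous_intros)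

lemma set_nn_integral_atMost_shift:
  fixes f :: "real \<Rightarrow> ennreal"
  assumes [measurable]: "f \<in> borel_measurable borel"
  shows "(\<integral>\<^sup>+t\<in>{..c}. f (t + a) \<partial>lborel) = (\<integral>\<^sup>+t\<in>{..c + a}. f t \<partial>lborel)"
  using nn_integral_real_affine[of "\<lambda>t. f t * indicator {..c + a} t" 1 a]
  by (simp add: add.commute indicator_def)

lemma nn_integral_unit_shifts:
  assumes [measurable]: "f \<in> borel_measurable borel"
  shows "(\<integral>\<^sup>+u\<in>{0<..1}. (\<integral>\<^sup>+n. f (real_of_int n + u) \<partial>count_space UNIV) \<partial>lborel) = (\<integral>\<^sup>+s. f s \<partial>lborel)"
proof -
  have cell: "(real_of_int n < s \<and> s \<le> real_of_int n + 1) \<longleftrightarrow> n = \<lceil>s\<rceil> - 1" for n s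
    by linarith
  have "(\<integral>\<^sup>+s. f s \<partial>lborel) =
      (\<integral>\<^sup>+s. \<integral>\<^sup>+n. f s * indicator {real_of_int n<..real_of_int n + 1} s \<partial>count_space UNIV \<partial>lborel)"
  proof (intro nn_integral_cong)
    fix s :: real
    have "(\<integral>\<^sup>+n. f s * indicator {real_of_int n<..real_of_int n + 1} s \<partial>count_space UNIV) =
        (\<integral>\<^sup>+n. f s * indicator {\<lceil>s\<rceil> - 1} n \<partial>count_space UNIV)"
      using cell by (intro nn_integral_cong) (simp add: indicator_def)
    then show "f s = (\<integral>\<^sup>+n. f s * indicator {real_of_int n<..real_of_int n + 1} s \<partial>count_space UNIV)"
      by simp
  qed
  also have "\<dots> = (\<integral>\<^sup>+n. \<integral>\<^sup>+s. f s * indicator {real_of_int n<..real_of_int n + 1} s \<partial>lborel \<partial>count_space UNIV)"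
    by (rule nn_integral_count_space_nn_integral) auto
  also have "\<dots> = (\<integral>\<^sup>+n. (\<integral>\<^sup>+u\<in>{0<..1}. f (real_of_int n + u) \<partial>lborel) \<partial>count_space UNIV)"
  proof (rule nn_integral_cong)
    fix n :: int
    have "(\<integral>\<^sup>+s. f s * indicator {real_of_int n<..real_of_int n + 1} s \<partial>lborel) =
        ennreal \<bar>1\<bar> * (\<integral>\<^sup>+u. f (real_of_int n + 1 * u) * indicator {real_of_int n<..real_of_int n + 1} (real_of_int n + 1 * u) \<partial>lborel)"
      by (rule nn_integral_real_affine) auto
    also have "\<dots> = (\<integral>\<^sup>+u\<in>{0<..1}. f (real_of_int n + u) \<partial>lborel)"
      unfolding abs_one ennreal_1 mult_1 mult_1_left by (intro nn_integral_cong) (auto simp: indicator_def)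
    finally show "(\<integral>\<^sup>+s. f s * indicator {real_of_int n<..real_of_int n + 1} s \<partial>lborel) =
        (\<integral>\<^sup>+u\<in>{0<..1}. f (real_of_int n + u) \<partial>lborel)" .
  qed
  also have "\<dots> = (\<integral>\<^sup>+u. \<integral>\<^sup>+n. f (real_of_int n + u) * indicator {0<..1} u \<partial>count_space UNIV \<partial>lborel)"
    by (rule nn_integral_count_space_nn_integral[symmetric]) auto
  also have "\<dots> = (\<integral>\<^sup>+u\<in>{0<..1}. (\<integral>\<^sup>+n. f (real_of_int n + u) \<partial>count_space UNIV) \<partial>lborel)"
    by (intro nn_integral_cong nn_integral_multc) auto
  finally show ?thesis ..
qed

lemma nn_integral_uniform_unit:
  fixes f :: "real \<Rightarrow> ennreal"
  assumes [measurable]: "f \<in> borel_measurable lborel"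
  shows "(\<integral>\<^sup>+u. f u \<partial>uniform_measure lborel {0<..1}) = (\<integral>\<^sup>+u\<in>{0<..1}. f u \<partial>lborel)"
  by (subst nn_integral_uniform_measure) (auto simp: mult.commute divide_ennreal_def)

section \<open>Weakly increasing bid sequences\<close>

text \<open>Unlike \<^const>\<open>det_strategy\<close>, bids may repeat: the shifted sequences \<open>n \<mapsto> G (n + u)\<close>
  of a bidding profile need not be strictly increasing.\<close>
definition bid_sequence :: "(int \<Rightarrow> real) \<Rightarrow> bool" where
  "bid_sequence b \<longleftrightarrow> (\<forall>n. 0 < b n) \<and> mono b \<and> (\<forall>T>0. (\<exists>n. T \<le> b n) \<and> (\<exists>n. b n < T))"

lemma bid_sequence_first_ge:
  assumes "bid_sequence b" "0 < T"
  obtains N where "T \<le> b N" "\<And>n. n < N \<Longrightarrow> b n < T"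
proof -
  obtain m j where m: "b m < T" and j: "T \<le> b j"
    using assms unfolding bid_sequence_def by blast
  have mono: "mono b" using assms(1) unfolding bid_sequence_def by blast
  define S where "S = {n \<in> {m..j}. T \<le> b n}"
  have "m < j" using mono_strict_invE[OF mono, of m j] m j by fastforce
  then have "j \<in> S" using j by (simp add: S_def)
  have "finite S" unfolding S_def by (rule finite_subset[of _ "{m..j}"]) auto
  with \<open>j \<in> S\<close> have fin: "finite S" "S \<noteq> {}" by auto
  show thesis
  proof
    show "T \<le> b (Min S)" using Min_in[OF fin] by (simp add: S_def)
    fix n assume n: "n < Min S"
    show "b n < T"
    proof (cases "m \<le> n")
      case True
      have "Min S \<le> j" using Min_le[OF fin(1) \<open>j \<in> S\<close>] .
      then have "n \<notin> S" using n Min_le[OF fin(1), of n] by force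
      then show ?thesis using True n \<open>Min S \<le> j\<close> by (auto simp: S_def)
    next
      case False
      then have "b n \<le> b m" using mono by (simp add: monoD)
      with m show ?thesis by simp
    qed
  qed
qed

lemma mono_jump_between:
  fixes b :: "int \<Rightarrow> real"
  assumes "mono b" "i < j" "b i < b j"
  shows "\<exists>n. i < n \<and> n \<le> j \<and> b (n - 1) < b n"
proof (rule ccontr)
  assume "\<not> ?thesis"
  then have flat: "b n \<le> b (n - 1)" if "i < n" "n \<le> j" for n
    using that by (meson not_le)
  have "b n \<le> b i" if "i \<le> n" "n \<le> j" for n
    using that
  proof (induction n rule: int_ge_induct)
    case (step n)
    then show ?case using flat[of "n + 1"] by simp
  qed simp
  then show False using assms by (simp add: not_le[symmetric])
qed

lemma jump_eq_imp_eq: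
  fixes b :: "int \<Rightarrow> real"
  assumes "mono b" "b (m - 1) < b m" "b (n - 1) < b n" "b m = b n"
  shows "m = n"
proof (rule ccontr)
  assume "m \<noteq> n"
  then consider "m < n" | "n < m" by linarith
  then show False
  proof cases
    case 1
    then have "b m \<le> b (n - 1)" using assms(1) by (simp add: monoD)
    then show False using assms by simp
  next
    case 2
    then have "b n \<le> b (m - 1)" using assms(1) by (simp add: monoD)
    then show False using assms by simp
  qed
qed

lemma bid_sequence_jump_below:
  assumes "bid_sequence b" "0 < t"
  shows "\<exists>n<m. b (n - 1) < b n \<and> b n < t"
proof -
  have mono: "mono b" and pos: "\<And>n. 0 < b n"
    using assms(1) unfolding bid_sequence_def by auto
  obtain m0 where m0: "b m0 < t" using assms unfolding bid_sequence_def by blast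
  define m' where "m' = min m m0 - 1"
  have "b m' \<le> b m0" using mono by (simp add: m'_def monoD)
  with m0 have "b m' < t" by simp
  obtain j where j: "b j < b m'" using assms(1) pos[of m'] unfolding bid_sequence_def by blast
  have "j < m'" using mono_strict_invE[OF mono j] .
  obtain n where "j < n" "n \<le> m'" "b (n - 1) < b n"
    using mono_jump_between[OF mono \<open>j < m'\<close> j] by blast
  moreover have "b n \<le> b m'" using \<open>n \<le> m'\<close> mono by (simp add: monoD)
  ultimately show ?thesis using \<open>b m' < t\<close> by (intro exI[of _ n]) (auto simp: m'_def)
qed

lemma bid_sequence_jump_above:
  assumes "bid_sequence b"
  shows "\<exists>n>m. b (n - 1) < b n \<and> s \<le> b n"
proof -
  have mono: "mono b" and pos: "\<And>n. 0 < b n"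
    using assms(1) unfolding bid_sequence_def by auto
  obtain m1 where m1: "max s 1 \<le> b m1"
    using assms unfolding bid_sequence_def by (meson zero_less_one less_max_iff_disj)
  define m' where "m' = max m m1"
  obtain j where j: "b m' + 1 \<le> b j" using assms pos[of m'] unfolding bid_sequence_def
    by (metis add_pos_pos zero_less_one)
  have "m' < j" using mono_strict_invE[OF mono, of m' j] j by fastforce
  obtain n where "m' < n" "n \<le> j" "b (n - 1) < b n"
    using mono_jump_between[OF mono \<open>m' < j\<close>] j by fastforce
  moreover have "b m1 \<le> b (n - 1)" using \<open>m' < n\<close> mono by (auto simp: m'_def monoD)
  ultimately show ?thesis using m1 by (intro exI[of _ n]) (auto simp: m'_def)
qed

lemma infinite_jumps_below:
  assumes "bid_sequence b" "0 < t"
  shows "infinite {n. b (n - 1) < b n \<and> b n < t}"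
proof
  assume "finite {n. b (n - 1) < b n \<and> b n < t}"
  then obtain L where "\<And>n. b (n - 1) < b n \<Longrightarrow> b n < t \<Longrightarrow> L \<le> n"
    using bdd_below_finite unfolding bdd_below_def by blast
  then show False using bid_sequence_jump_below[OF assms, of L] by force
qed

lemma infinite_jumps_above:
  assumes "bid_sequence b"
  shows "infinite {n. b (n - 1) < b n \<and> s \<le> b n}"
proof
  assume "finite {n. b (n - 1) < b n \<and> s \<le> b n}"
  then obtain U where "\<And>n. b (n - 1) < b n \<Longrightarrow> s \<le> b n \<Longrightarrow> n \<le> U"
    using bdd_above_finite unfolding bdd_above_def by blast
  then show False using bid_sequence_jump_above[OF assms, of U s] by force
qed

lemma finite_bids_between:
  assumes "bid_sequence b" "0 < s"
  shows "finite {n. s \<le> b n \<and> b n < t}"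
proof -
  have mono: "mono b" using assms unfolding bid_sequence_def by auto
  obtain n1 where n1: "b n1 < s" using assms unfolding bid_sequence_def by blast
  obtain n2 where n2: "max t 1 \<le> b n2"
    using assms unfolding bid_sequence_def by (meson zero_less_one less_max_iff_disj)
  have "{n. s \<le> b n \<and> b n < t} \<subseteq> {n1..n2}"
  proof
    fix n assume "n \<in> {n. s \<le> b n \<and> b n < t}"
    then have "b n1 < b n" "b n < b n2" using n1 n2 by auto
    then show "n \<in> {n1..n2}"
      using mono_strict_invE[OF mono] by (metis atLeastAtMost_iff less_imp_le)
  qed
  then show ?thesis using finite_subset by blast
qed

lemma det_strategy_iff_strict_bid_sequence: "det_strategy b \<longleftrightarrow> bid_sequence b \<and> strict_mono b"
proof
  assume det: "det_strategy b"
  then have pos: "0 < b n" and sm: "strict_mono b" for n unfolding det_strategy_def by auto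
  have "(\<exists>n. T \<le> b n) \<and> (\<exists>n. b n < T)" if "0 < T" for T
  proof -
    obtain n where "T \<le> b n" "\<forall>m<n. b m < T" using det \<open>0 < T\<close> unfolding det_strategy_def by blast
    then show ?thesis by (metis less_add_one diff_add_cancel)
  qed
  then show "bid_sequence b \<and> strict_mono b"
    using pos sm strict_mono_mono unfolding bid_sequence_def by blast
next
  assume "bid_sequence b \<and> strict_mono b"
  then show "det_strategy b"
    unfolding det_strategy_def using bid_sequence_first_ge
    by (metis bid_sequence_def)
qed

lemma det_strategy_iff_countable:
  "det_strategy b \<longleftrightarrow> (\<forall>n. 0 < b n) \<and> (\<forall>n. b n < b (n + 1)) \<and>
     (\<forall>k::nat. \<exists>n. real k \<le> b n) \<and> (\<forall>k::nat. \<exists>n. b n < inverse (1 + real k))"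
proof -
  have "bid_sequence b \<longleftrightarrow> (\<forall>n. 0 < b n) \<and> mono b \<and> (\<forall>k::nat. \<exists>n. real k \<le> b n) \<and>
      (\<forall>k::nat. \<exists>n. b n < inverse (1 + real k))"
  proof -
    have "(\<forall>T>0. \<exists>n. T \<le> b n) \<longleftrightarrow> (\<forall>k::nat. \<exists>n. real k \<le> b n)"
    proof safe
      fix k :: nat assume unbdd: "\<forall>T>0. \<exists>n. T \<le> b n"
      have "0 < real k + 1" by simp
      then obtain n where "real k + 1 \<le> b n" using unbdd by blast
      then show "\<exists>n. real k \<le> b n" by (intro exI[of _ n]) simp
    next
      fix T :: real assume "\<forall>k::nat. \<exists>n. real k \<le> b n"
      then obtain n where "real (nat \<lceil>T\<rceil>) \<le> b n" by blast
      then show "\<exists>n. T \<le> b n" by (intro exI[of _ n]) linarith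
    qed
    moreover have "(\<forall>T>0. \<exists>n. b n < T) \<longleftrightarrow> (\<forall>k::nat. \<exists>n. b n < inverse (1 + real k))"
    proof safe
      fix k :: nat assume "\<forall>T>0. \<exists>n. b n < T"
      then show "\<exists>n. b n < inverse (1 + real k)" by simp
    next
      fix T :: real assume "\<forall>k::nat. \<exists>n. b n < inverse (1 + real k)" "0 < T"
      moreover obtain k where "inverse (real (Suc k)) < T" using reals_Archimedean \<open>0 < T\<close> by blast
      ultimately show "\<exists>n. b n < T" by (metis of_nat_Suc add.commute order.strict_trans)
    qed
    ultimately show ?thesis unfolding bid_sequence_def by blast
  qed
  moreover have "strict_mono b \<longleftrightarrow> (\<forall>n. b n < b (n + 1))"
    using strict_mono_if_less_succ[of b] strict_monoD[of b] by auto
  ultimately show ?thesis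
    unfolding det_strategy_iff_strict_bid_sequence using strict_mono_mono by blast
qed

lemma measurable_det_strategy [measurable]:
  "Measurable.pred (Pi\<^sub>M UNIV (\<lambda>_::int. borel :: real measure)) det_strategy"
  unfolding det_strategy_iff_countable by measurable

section \<open>Counting distinct bids\<close>

definition bid_count :: "(int \<Rightarrow> real) \<Rightarrow> real \<Rightarrow> real \<Rightarrow> ennreal" where
  "bid_count b s t = emeasure (count_space UNIV) {n. b (n - 1) < b n \<and> s \<le> b n \<and> b n < t}"

text \<open>Only the first bid of a run of equal bids is charged.\<close>
definition distinct_cost :: "(int \<Rightarrow> real) \<Rightarrow> real \<Rightarrow> ennreal" where
  "distinct_cost b T =
     (\<integral>\<^sup>+n. ennreal (b n) * indicator {n. b (n - 1) < b n \<and> b (n - 1) < T} n \<partial>count_space UNIV)"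

definition bids_above :: "(int \<Rightarrow> real) \<Rightarrow> real \<Rightarrow> real \<Rightarrow> ennreal" where
  "bids_above b T r = emeasure (count_space UNIV) {n. b (n - 1) < b n \<and> b (n - 1) < T \<and> r < b n}"

lemma bid_count_empty:
  assumes "t \<le> s"
  shows "bid_count b s t = 0"
proof -
  have empty: "{n. b (n - 1) < b n \<and> s \<le> b n \<and> b n < t} = {}" using assms by auto
  show ?thesis unfolding bid_count_def empty by simp
qed

lemma bid_count_add:
  assumes "s \<le> t" "t \<le> u"
  shows "bid_count b s u = bid_count b s t + bid_count b t u"
proof -
  have "bid_count b s t + bid_count b t u = emeasure (count_space UNIV)
      ({n. b (n - 1) < b n \<and> s \<le> b n \<and> b n < t} \<union> {n. b (n - 1) < b n \<and> t \<le> b n \<and> b n < u})"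
    unfolding bid_count_def by (rule plus_emeasure) auto
  also have "\<dots> = bid_count b s u"
    unfolding bid_count_def using assms by (intro arg_cong[where f = "emeasure _"]) auto
  finally show ?thesis by simp
qed

lemma bid_count_mono: "s' \<le> s \<Longrightarrow> t \<le> t' \<Longrightarrow> bid_count b s t \<le> bid_count b s' t'"
  unfolding bid_count_def by (intro emeasure_mono) auto

lemma bid_count_le_distinct_cost:
  assumes "0 < s"
  shows "ennreal s * bid_count b s t \<le> distinct_cost b t"
proof -
  have "ennreal s * bid_count b s t =
      (\<integral>\<^sup>+n. ennreal s * indicator {n. b (n - 1) < b n \<and> s \<le> b n \<and> b n < t} n \<partial>count_space UNIV)"
    unfolding bid_count_def by (simp add: nn_integral_cmult_indicator)
  also have "\<dots> \<le> distinct_cost b t"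
    unfolding distinct_cost_def by (intro nn_integral_mono) (auto simp: indicator_def intro: ennreal_leI)
  finally show ?thesis .
qed

lemma bid_count_plus_one_le_bids_above:
  assumes "bid_sequence b" "0 < T" "r < t" "t \<le> T"
  shows "bid_count b t T + 1 \<le> bids_above b T r"
proof -
  obtain N where N: "T \<le> b N" "\<And>n. n < N \<Longrightarrow> b n < T"
    using bid_sequence_first_ge[OF assms(1,2)] by blast
  have "b (N - 1) < T" using N(2) by simp
  define A where "A = {n. b (n - 1) < b n \<and> t \<le> b n \<and> b n < T}"
  have "bid_count b t T + 1 = emeasure (count_space UNIV) (A \<union> {N})"
    unfolding bid_count_def A_def using N(1) by (subst plus_emeasure[symmetric]) auto
  also have "\<dots> \<le> bids_above b T r"
    unfolding bids_above_def A_def using N(1) \<open>b (N - 1) < T\<close> assms(3,4)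
    by (intro emeasure_mono) auto
  finally show ?thesis .
qed

lemma one_le_bid_count_plus_bids_above:
  assumes "bid_sequence b" "0 < T" "r < t"
  shows "1 \<le> bid_count b T t + bids_above b T r"
proof -
  obtain N where N: "T \<le> b N" "\<And>n. n < N \<Longrightarrow> b n < T"
    using bid_sequence_first_ge[OF assms(1,2)] by blast
  have "b (N - 1) < T" using N(2) by simp
  have "1 = emeasure (count_space UNIV) {N}" by simp
  also have "\<dots> \<le> emeasure (count_space UNIV)
      ({n. b (n - 1) < b n \<and> T \<le> b n \<and> b n < t} \<union> {n. b (n - 1) < b n \<and> b (n - 1) < T \<and> r < b n})"
    using N(1) \<open>b (N - 1) < T\<close> assms(3) by (intro emeasure_mono) auto
  also have "\<dots> \<le> bid_count b T t + bids_above b T r"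
    unfolding bid_count_def bids_above_def by (rule emeasure_subadditive) auto
  finally show ?thesis .
qed

lemma nn_integral_bids_above:
  assumes "\<And>n. 0 < b n"
  shows "(\<integral>\<^sup>+r\<in>{0<..}. bids_above b T r \<partial>lborel) = distinct_cost b T"
proof -
  have "(\<integral>\<^sup>+r\<in>{0<..}. bids_above b T r \<partial>lborel) =
      (\<integral>\<^sup>+r. \<integral>\<^sup>+n. indicator {n. b (n - 1) < b n \<and> b (n - 1) < T} n * indicator {0<..<b n} r
         \<partial>count_space UNIV \<partial>lborel)"
    unfolding bids_above_def emeasure_count_space_eq_nn_integral
    by (subst nn_integral_multc[symmetric]) (auto intro!: nn_integral_cong simp: indicator_def)
  also have "\<dots> = (\<integral>\<^sup>+n. \<integral>\<^sup>+r. indicator {n. b (n - 1) < b n \<and> b (n - 1) < T} n * indicator {0<..<b n} r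
      \<partial>lborel \<partial>count_space UNIV)"
    by (rule nn_integral_count_space_nn_integral) measurable
  also have "\<dots> = distinct_cost b T"
    unfolding distinct_cost_def using assms
    by (intro nn_integral_cong) (simp add: nn_integral_multc less_imp_le mult.commute)
  finally show ?thesis .
qed

lemma SUP_bid_count_below:
  assumes "bid_sequence b"
  shows "(SUP k. bid_count b (inverse (1 + real k)) 1) = \<infinity>"
proof -
  let ?A = "\<lambda>k. {n. b (n - 1) < b n \<and> inverse (1 + real k) \<le> b n \<and> b n < 1}"
  have "incseq ?A"
  proof (rule incseq_SucI)
    fix k
    have "inverse (2 + real k) \<le> inverse (1 + real k)" by (rule le_imp_inverse_le) auto
    then have "inverse (2 + real k) \<le> x" if "inverse (1 + real k) \<le> x" for x :: real
      using that by (rule order_trans)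
    then show "?A k \<subseteq> ?A (Suc k)" by auto
  qed
  then have "(SUP k. bid_count b (inverse (1 + real k)) 1) = emeasure (count_space UNIV) (\<Union>k. ?A k)"
    unfolding bid_count_def by (intro SUP_emeasure_incseq) auto
  also have "(\<Union>k. ?A k) = {n. b (n - 1) < b n \<and> b n < 1}"
  proof safe
    fix n assume "b (n - 1) < b n" "b n < 1"
    obtain k where "inverse (real (Suc k)) < b n"
      using reals_Archimedean assms unfolding bid_sequence_def by blast
    then have "n \<in> ?A k" using \<open>b (n - 1) < b n\<close> \<open>b n < 1\<close> by simp
    then show "n \<in> (\<Union>k. ?A k)" by blast
  qed
  also have "emeasure (count_space UNIV) \<dots> = \<infinity>"
    using infinite_jumps_below[OF assms, of 1] by simp
  finally show ?thesis .
qed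

lemma SUP_bid_count_above:
  assumes "bid_sequence b"
  shows "(SUP k. bid_count b 1 (1 + real k)) = \<infinity>"
proof -
  let ?A = "\<lambda>k. {n. b (n - 1) < b n \<and> 1 \<le> b n \<and> b n < 1 + real k}"
  have "incseq ?A" by (rule incseq_SucI) auto
  then have "(SUP k. bid_count b 1 (1 + real k)) = emeasure (count_space UNIV) (\<Union>k. ?A k)"
    unfolding bid_count_def by (intro SUP_emeasure_incseq) auto
  also have "(\<Union>k. ?A k) = {n. b (n - 1) < b n \<and> 1 \<le> b n}"
  proof safe
    fix n assume "b (n - 1) < b n" "1 \<le> b n"
    obtain k where "b n < real k" using reals_Archimedean2 by blast
    then have "n \<in> ?A k" using \<open>b (n - 1) < b n\<close> \<open>1 \<le> b n\<close> by simp
    then show "n \<in> (\<Union>k. ?A k)" by blast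
  qed
  also have "emeasure (count_space UNIV) \<dots> = \<infinity>"
    using infinite_jumps_above[OF assms, of 1] by simp
  finally show ?thesis .
qed

lemma emeasure_jumps_at_le_one:
  fixes b :: "int \<Rightarrow> real"
  assumes "mono b"
  shows "emeasure (count_space UNIV) {n. b (n - 1) < b n \<and> b n = c} \<le> 1"
proof (cases "{n. b (n - 1) < b n \<and> b n = c} = {}")
  case True
  then show ?thesis by (simp only: emeasure_empty zero_le)
next
  case False
  then obtain m where m: "b (m - 1) < b m" "b m = c" by blast
  have "n = m" if "b (n - 1) < b n" "b n = c" for n
    using jump_eq_imp_eq[OF assms that(1) m(1)] m(2) that(2) by simp
  then have "{n. b (n - 1) < b n \<and> b n = c} \<subseteq> {m}" by blast
  then have "emeasure (count_space UNIV) {n. b (n - 1) < b n \<and> b n = c} \<le> emeasure (count_space UNIV) {m}"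
    by (rule emeasure_mono) simp
  then show ?thesis by simp
qed

lemma INF_bid_count_windows_le_one:
  assumes "bid_sequence b" "0 < c"
  shows "(INF k. bid_count b (c - c / (real k + 2)) (c + c / (real k + 2))) \<le> 1"
proof -
  let ?A = "\<lambda>k. {n. b (n - 1) < b n \<and> c - c / (real k + 2) \<le> b n \<and> b n < c + c / (real k + 2)}"
  have shrink: "c / (real (Suc k) + 2) \<le> c / (real k + 2)" for k
    using assms(2) by (intro divide_left_mono) auto
  have dec: "decseq ?A"
  proof (rule decseq_SucI)
    fix k
    have "c - c / (real k + 2) \<le> x" if "c - c / (real (Suc k) + 2) \<le> x" for x
      using that shrink[of k] by linarith
    moreover have "x < c + c / (real k + 2)" if "x < c + c / (real (Suc k) + 2)" for x
      using that shrink[of k] by linarith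
    ultimately show "?A (Suc k) \<subseteq> ?A k" by blast
  qed
  have "finite (?A 0)"
  proof (rule finite_subset)
    show "?A 0 \<subseteq> {n. c / 2 \<le> b n \<and> b n < c + c / 2}" by auto
    show "finite {n. c / 2 \<le> b n \<and> b n < c + c / 2}"
      using assms by (intro finite_bids_between) auto
  qed
  then have fin: "emeasure (count_space UNIV) (?A 0) \<noteq> \<infinity>" by simp
  have "(INF k. bid_count b (c - c / (real k + 2)) (c + c / (real k + 2))) =
      emeasure (count_space UNIV) (\<Inter>k. ?A k)"
    unfolding bid_count_def
  proof (rule INF_emeasure_decseq')
    show "\<exists>i. emeasure (count_space UNIV) (?A i) \<noteq> \<infinity>" using fin by blast
  qed (use dec in auto)
  also have "(\<Inter>k. ?A k) = {n. b (n - 1) < b n \<and> b n \<in> (\<Inter>k. {c - c / (real k + 2)..<c + c / (real k + 2)})}"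
    by auto
  also have "\<dots> = {n. b (n - 1) < b n \<and> b n = c}"
    unfolding Inter_shrinking_windows[OF assms(2)] by simp
  also have "emeasure (count_space UNIV) \<dots> \<le> 1"
    using assms(1) unfolding bid_sequence_def by (intro emeasure_jumps_at_le_one) simp
  finally show ?thesis .
qed

lemma det_cost_eq_distinct_cost:
  assumes "det_strategy b" "0 < T"
  shows "det_cost b T = distinct_cost b T"
proof -
  have sm: "strict_mono b" using assms(1) unfolding det_strategy_def by auto
  obtain N where N: "T \<le> b N" "\<And>m. m < N \<Longrightarrow> b m < T"
    using assms unfolding det_strategy_def by blast
  have "nstar b T = N"
    unfolding nstar_def
  proof (rule the_equality)
    fix n assume n: "T \<le> b n \<and> (\<forall>m<n. b m < T)"
    show "n = N" using n N by (metis linorder_neqE_linordered_idom not_le)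
  qed (use N in auto)
  moreover have "b (n - 1) < T \<longleftrightarrow> n \<le> N" for n
    using N strict_mono_leD[OF sm, of N "n - 1"] by force
  ultimately show ?thesis
    unfolding det_cost_def distinct_cost_def using strict_monoD[OF sm, of "n - 1" n for n]
    by (intro nn_integral_cong) (simp add: indicator_def)
qed

lemma rand_cost_eq_distinct_cost:
  assumes "rand_strategy B" "0 < T"
  shows "rand_cost B T = (\<integral>\<^sup>+b. distinct_cost b T \<partial>B)"
  unfolding rand_cost_def using assms(1) unfolding rand_strategy_def
  by (intro nn_integral_cong_AE) (auto elim!: eventually_mono simp: det_cost_eq_distinct_cost assms(2))

section \<open>Normalising bidding profiles\<close>

lemma mono_crosses_one:
  fixes G :: "real \<Rightarrow> real"
  assumes mono: "mono G" and ge_one: "\<And>x. 0 < x \<Longrightarrow> 1 \<le> G x" and less_one: "G x\<^sub>1 < 1"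
  obtains a where "a \<le> 0" "\<And>x. x < a \<Longrightarrow> G x < 1" "\<And>x. a < x \<Longrightarrow> 1 \<le> G x"
proof -
  define A where "A = {x. 1 \<le> G x}"
  have bdd: "bdd_below A"
  proof
    fix z assume "z \<in> A"
    then have "G x\<^sub>1 < G z" using less_one by (simp add: A_def)
    then show "x\<^sub>1 \<le> z" using mono_strict_invE[OF mono] by (meson less_imp_le)
  qed
  have "1 \<in> A" using ge_one[of 1] by (simp add: A_def)
  have "Inf A \<le> 0"
  proof (rule ccontr)
    assume "\<not> Inf A \<le> 0"
    then have "Inf A / 2 \<in> A" using ge_one[of "Inf A / 2"] by (simp add: A_def)
    then have "Inf A \<le> Inf A / 2" by (rule cInf_lower[OF _ bdd])
    with \<open>\<not> Inf A \<le> 0\<close> show False by simp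
  qed
  moreover have "G x < 1" if "x < Inf A" for x
    using cInf_lower[OF _ bdd, of x] that by (force simp: A_def)
  moreover have "1 \<le> G x" if "Inf A < x" for x
  proof -
    have "\<exists>z\<in>A. z < x" using cInf_less_iff[of A x] \<open>1 \<in> A\<close> bdd \<open>Inf A < x\<close> by auto
    then obtain z where "z \<in> A" "z < x" by blast
    then show ?thesis using mono by (force simp: A_def dest: monoD[of G z x])
  qed
  ultimately show thesis by (rule that)
qed

lemma bidding_profile_shift:
  fixes G :: "real \<Rightarrow> real"
  assumes mono: "mono G" and lc: "\<And>x. continuous (at_left x) G" and pos: "\<And>x. 0 < G x"
    and rob: "\<And>x. (\<integral>\<^sup>+t\<in>{..x + 1}. ennreal (G t) \<partial>lborel) \<le> ennreal (rho * G x)"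
    and con: "(\<integral>\<^sup>+t\<in>{..1}. ennreal (G t) \<partial>lborel) \<le> ennreal chi"
    and ge_one: "\<And>x. 0 < x \<Longrightarrow> 1 \<le> G x" and less_one: "G x\<^sub>1 < 1"
  obtains a where "bidding_profile rho chi (\<lambda>x. G (x + a))"
proof -
  note [measurable] = borel_measurable_mono[OF mono]
  obtain a where a: "a \<le> 0" "\<And>x. x < a \<Longrightarrow> G x < 1" "\<And>x. a < x \<Longrightarrow> 1 \<le> G x"
    using mono_crosses_one[OF mono ge_one less_one] by blast
  have shift: "(\<integral>\<^sup>+t\<in>{..c}. ennreal (G (t + a)) \<partial>lborel) = (\<integral>\<^sup>+t\<in>{..c + a}. ennreal (G t) \<partial>lborel)" for c
    by (rule set_nn_integral_atMost_shift) measurable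
  have le_con: "(\<integral>\<^sup>+t\<in>{..1 + a}. ennreal (G t) \<partial>lborel) \<le> (\<integral>\<^sup>+t\<in>{..1}. ennreal (G t) \<partial>lborel)"
    using \<open>a \<le> 0\<close> by (intro nn_integral_mono) (auto simp: indicator_def)
  have "bidding_profile rho chi (\<lambda>x. G (x + a))"
    unfolding bidding_profile_def
  proof (intro conjI allI impI)
    show "mono (\<lambda>x. G (x + a))" using mono by (simp add: mono_def)
    show "continuous (at_left x) (\<lambda>x. G (x + a))" for x using lc by (rule continuous_at_left_shift)
    show "0 < G (x + a)" for x by (rule pos)
    show "G (x + a) < 1" if "x < 0" for x using that by (intro a(2)) simp
    show "1 \<le> G (x + a)" if "0 < x" for x using that by (intro a(3)) simp
    show "(\<integral>\<^sup>+t\<in>{..x + 1}. ennreal (G (t + a)) \<partial>lborel) \<le> ennreal (rho * G (x + a))" for x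
      using rob[of "x + a"] by (simp add: shift algebra_simps)
    show "(\<integral>\<^sup>+t\<in>{..1}. ennreal (G (t + a)) \<partial>lborel) \<le> ennreal chi"
      using le_con con by (simp add: shift)
  qed
  then show thesis by (rule that)
qed

lemma bidding_profile_ex_less:
  assumes "bidding_profile rho chi G" "0 < T"
  shows "\<exists>x. G x < T"
proof (rule ccontr)
  assume "\<not> ?thesis"
  then have ge: "T \<le> G x" for x by (simp add: not_less)
  define k where "k = \<bar>chi\<bar> / T + 1"
  have "0 \<le> k" using assms(2) by (simp add: k_def)
  have "ennreal (T * k) = (\<integral>\<^sup>+t\<in>{1 - k..1}. ennreal T \<partial>lborel)"
    using \<open>0 \<le> k\<close> assms(2) by (simp add: nn_integral_cmult_indicator ennreal_mult)
  also have "\<dots> \<le> (\<integral>\<^sup>+t\<in>{..1}. ennreal (G t) \<partial>lborel)"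
    using ge by (intro nn_integral_mono) (auto simp: indicator_def intro: ennreal_leI)
  also have "\<dots> \<le> ennreal chi" using assms(1) by (simp add: bidding_profile_def)
  finally have le: "ennreal (T * k) \<le> ennreal chi" .
  have "T * k = \<bar>chi\<bar> + T" using assms(2) by (simp add: k_def field_simps)
  moreover have "T * k \<le> chi \<or> (T * k \<le> 0 \<and> chi \<le> 0)" using le unfolding ennreal_le_iff2 by blast
  ultimately show False using assms(2) abs_ge_self[of chi] abs_ge_zero[of chi] by linarith
qed

lemma bidding_profile_unbounded:
  assumes "bidding_profile rho chi G"
  shows "\<exists>x. c \<le> G x"
proof (rule ccontr)
  assume "\<not> ?thesis"
  then have lt: "G x < c" for x by (simp add: not_le)
  have mono: "mono G" and pos: "\<And>x. 0 < G x"
    and rob: "\<And>x. (\<integral>\<^sup>+t\<in>{..x + 1}. ennreal (G t) \<partial>lborel) \<le> ennreal (rho * G x)"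
    using assms unfolding bidding_profile_def by auto
  define k where "k = \<bar>rho\<bar> * \<bar>c\<bar> / G 0"
  have "0 \<le> k" using pos[of 0] by (simp add: k_def)
  have "ennreal (G 0 * (k + 1)) = (\<integral>\<^sup>+t\<in>{0..k + 1}. ennreal (G 0) \<partial>lborel)"
    using \<open>0 \<le> k\<close> pos[of 0] by (simp add: nn_integral_cmult_indicator ennreal_mult)
  also have "\<dots> \<le> (\<integral>\<^sup>+t\<in>{..k + 1}. ennreal (G t) \<partial>lborel)"
  proof (intro nn_integral_mono)
    fix t
    have "G 0 \<le> G t" if "0 \<le> t" using that by (rule monoD[OF mono])
    then show "ennreal (G 0) * indicator {0..k + 1} t \<le> ennreal (G t) * indicator {..k + 1} t"
      by (auto simp: indicator_def intro: ennreal_leI)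
  qed
  also have "\<dots> \<le> ennreal (rho * G k)" by (rule rob)
  also have "\<dots> \<le> ennreal (\<bar>rho\<bar> * \<bar>c\<bar>)"
    using lt[of k] pos[of k] by (intro ennreal_leI mult_mono) auto
  finally have "G 0 * (k + 1) \<le> \<bar>rho\<bar> * \<bar>c\<bar>" by simp
  moreover have "G 0 * (k + 1) = \<bar>rho\<bar> * \<bar>c\<bar> + G 0" using pos[of 0] by (simp add: k_def field_simps)
  ultimately show False using pos[of 0] by linarith
qed

lemma bidding_profile_level:
  assumes prof: "bidding_profile rho chi G" and "0 < T"
  obtains a where "G a \<le> T" "\<And>x. G x < T \<Longrightarrow> x \<le> a"
proof -
  have mono: "mono G" and lc: "continuous (at_left x) G" for x
    using prof unfolding bidding_profile_def by auto
  define S where "S = {x. G x < T}"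
  have "S \<noteq> {}" using bidding_profile_ex_less[OF prof \<open>0 < T\<close>] by (auto simp: S_def)
  obtain x\<^sub>2 where x\<^sub>2: "T \<le> G x\<^sub>2" using bidding_profile_unbounded[OF prof] by blast
  have bdd: "bdd_above S"
  proof
    fix z assume "z \<in> S"
    then have "G z < G x\<^sub>2" using x\<^sub>2 by (simp add: S_def)
    then show "z \<le> x\<^sub>2" using mono_strict_invE[OF mono] by (meson less_imp_le)
  qed
  have le_Sup: "x \<le> Sup S" if "G x < T" for x
    using that by (intro cSup_upper bdd) (simp add: S_def)
  have le_T: "G (Sup S) \<le> T"
  proof (rule tendsto_upperbound)
    show "(G \<longlongrightarrow> G (Sup S)) (at_left (Sup S))" using lc by (simp add: continuous_within)
    show "eventually (\<lambda>y. G y \<le> T) (at_left (Sup S))"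
      unfolding eventually_at_left_field
    proof (intro exI[of _ "Sup S - 1"] conjI allI impI)
      fix y assume "Sup S - 1 < y" "y < Sup S"
      then obtain z where "z \<in> S" "y < z" using less_cSup_iff[OF \<open>S \<noteq> {}\<close> bdd] by blast
      then have "G y \<le> G z" using mono by (simp add: monoD)
      with \<open>z \<in> S\<close> show "G y \<le> T" by (simp add: S_def)
    qed simp
  qed simp
  show thesis using le_T le_Sup by (rule that)
qed

section \<open>The bidding profile of a randomized strategy\<close>

locale robust_random_bids = prob_space M for M :: "'a measure" +
  fixes \<beta> :: "'a \<Rightarrow> int \<Rightarrow> real" and rho :: real
  assumes measurable_bid [measurable]: "\<And>n. (\<lambda>\<omega>. \<beta> \<omega> n) \<in> borel_measurable M"
    and AE_bid_sequence: "AE \<omega> in M. bid_sequence (\<beta> \<omega>)"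
    and rho_pos: "0 < rho"
    and expected_distinct_cost_le:
      "\<And>T. 0 < T \<Longrightarrow> (\<integral>\<^sup>+\<omega>. distinct_cost (\<beta> \<omega>) T \<partial>M) \<le> ennreal (rho * T)"
begin

definition expected_count :: "real \<Rightarrow> real \<Rightarrow> ennreal" where
  "expected_count s t = (\<integral>\<^sup>+\<omega>. bid_count (\<beta> \<omega>) s t \<partial>M)"

definition count_level :: "real \<Rightarrow> real" where
  "count_level t = (if 1 \<le> t then enn2real (expected_count 1 t) else - enn2real (expected_count t 1))"

definition profile :: "real \<Rightarrow> real" where
  "profile x = Sup {t. 0 < t \<and> count_level t < x}"

lemma measurable_bid_count [measurable]: "(\<lambda>\<omega>. bid_count (\<beta> \<omega>) s t) \<in> borel_measurable M"
  unfolding bid_count_def by measurable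

lemma measurable_bids_above [measurable]: "(\<lambda>\<omega>. bids_above (\<beta> \<omega>) T r) \<in> borel_measurable M"
  unfolding bids_above_def by measurable

lemma expected_count_finite:
  assumes "0 < s"
  shows "expected_count s t < \<infinity>"
proof (cases "t \<le> s")
  case True
  then show ?thesis by (simp add: expected_count_def bid_count_empty)
next
  case False
  have "ennreal s * expected_count s t = (\<integral>\<^sup>+\<omega>. ennreal s * bid_count (\<beta> \<omega>) s t \<partial>M)"
    unfolding expected_count_def by (simp add: nn_integral_cmult)
  also have "\<dots> \<le> (\<integral>\<^sup>+\<omega>. distinct_cost (\<beta> \<omega>) t \<partial>M)"
    by (intro nn_integral_mono bid_count_le_distinct_cost assms)
  also have "\<dots> \<le> ennreal (rho * t)"
    using False assms by (intro expected_distinct_cost_le) simp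
  finally have le: "ennreal s * expected_count s t \<le> ennreal (rho * t)" .
  show ?thesis
  proof (rule ccontr)
    assume "\<not> expected_count s t < \<infinity>"
    then have "ennreal s * expected_count s t = \<infinity>"
      using assms by (simp add: less_top[symmetric] ennreal_mult_top)
    with le show False by (simp add: top_unique)
  qed
qed

lemma expected_count_add:
  assumes "s \<le> t" "t \<le> u"
  shows "expected_count s u = expected_count s t + expected_count t u"
  unfolding expected_count_def bid_count_add[OF assms] by (rule nn_integral_add) auto

lemma expected_count_mono: "s' \<le> s \<Longrightarrow> t \<le> t' \<Longrightarrow> expected_count s t \<le> expected_count s' t'"
  unfolding expected_count_def by (intro nn_integral_mono bid_count_mono)

lemma count_level_diff:
  assumes "0 < s" "s \<le> t"
  shows "count_level t - count_level s = enn2real (expected_count s t)"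
proof -
  have add: "enn2real (expected_count a c) = enn2real (expected_count a b) + enn2real (expected_count b c)"
    if "0 < a" "a \<le> b" "b \<le> c" for a b c
    using expected_count_add[OF that(2,3)] expected_count_finite[of a b] expected_count_finite[of b c] that
    by (simp add: enn2real_plus)
  consider "1 \<le> s" | "s < 1" "1 \<le> t" | "t < 1" using assms by linarith
  then show ?thesis
  proof cases
    case 1
    then show ?thesis using add[of 1 s t] assms by (simp add: count_level_def)
  next
    case 2
    then show ?thesis using add[of s 1 t] assms by (simp add: count_level_def)
  next
    case 3
    then show ?thesis using add[of s t 1] assms by (simp add: count_level_def)
  qed
qed

lemma count_level_mono: "0 < s \<Longrightarrow> s \<le> t \<Longrightarrow> count_level s \<le> count_level t"
  using count_level_diff[of s t] enn2real_nonneg[of "expected_count s t"] by linarith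

lemma count_level_one: "count_level 1 = 0"
  by (simp add: count_level_def expected_count_def bid_count_empty)

lemma count_level_le_one: "t \<le> 1 \<Longrightarrow> count_level t = - enn2real (expected_count t 1)"
  by (cases "t = 1") (simp_all add: count_level_def expected_count_def bid_count_empty)

lemma count_level_unbounded_below: "\<exists>t>0. count_level t < x"
proof -
  have "(SUP k. expected_count (inverse (1 + real k)) 1) = \<infinity>"
    unfolding expected_count_def
  proof (rule SUP_nn_integral_eq_top)
    show "incseq (\<lambda>k \<omega>. bid_count (\<beta> \<omega>) (inverse (1 + real k)) 1)"
      by (intro incseq_SucI le_funI bid_count_mono le_imp_inverse_le) auto
    show "AE \<omega> in M. (SUP k. bid_count (\<beta> \<omega>) (inverse (1 + real k)) 1) = \<infinity>"
      using AE_bid_sequence by eventually_elim (rule SUP_bid_count_below)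
  qed simp
  then have "ennreal \<bar>x\<bar> < (SUP k. expected_count (inverse (1 + real k)) 1)" by (simp only:) simp
  then obtain k where k: "ennreal \<bar>x\<bar> < expected_count (inverse (1 + real k)) 1"
    unfolding less_SUP_iff by blast
  have t: "0 < inverse (1 + real k)" "inverse (1 + real k) \<le> 1" by (simp_all add: inverse_le_1_iff)
  have "\<bar>x\<bar> < enn2real (expected_count (inverse (1 + real k)) 1)"
    using k expected_count_finite[OF t(1)] by (rule less_enn2real_if_ennreal_less)
  then have "count_level (inverse (1 + real k)) < x" by (simp add: count_level_le_one[OF t(2)])
  with t(1) show ?thesis by blast
qed

lemma count_level_unbounded_above: "\<exists>t>0. x \<le> count_level t"
proof -
  have "(SUP k. expected_count 1 (1 + real k)) = \<infinity>"
    unfolding expected_count_def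
  proof (rule SUP_nn_integral_eq_top)
    show "incseq (\<lambda>k \<omega>. bid_count (\<beta> \<omega>) 1 (1 + real k))"
      by (intro incseq_SucI le_funI bid_count_mono) auto
    show "AE \<omega> in M. (SUP k. bid_count (\<beta> \<omega>) 1 (1 + real k)) = \<infinity>"
      using AE_bid_sequence by eventually_elim (rule SUP_bid_count_above)
  qed simp
  then have "ennreal \<bar>x\<bar> < (SUP k. expected_count 1 (1 + real k))" by (simp only:) simp
  then obtain k where k: "ennreal \<bar>x\<bar> < expected_count 1 (1 + real k)"
    unfolding less_SUP_iff by blast
  have "\<bar>x\<bar> < enn2real (expected_count 1 (1 + real k))"
    using k expected_count_finite[of 1] by (rule less_enn2real_if_ennreal_less) simp
  then have "x \<le> count_level (1 + real k)" by (simp add: count_level_def)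
  then show ?thesis by (intro exI[of _ "1 + real k"]) simp
qed

lemma bdd_above_profile_set: "bdd_above {t. 0 < t \<and> count_level t < x}"
proof -
  obtain t0 where t0: "0 < t0" "x \<le> count_level t0" using count_level_unbounded_above by blast
  have "t \<le> t0" if "0 < t" "count_level t < x" for t
  proof (rule ccontr)
    assume "\<not> t \<le> t0"
    then have "count_level t0 \<le> count_level t" using t0(1) by (intro count_level_mono) auto
    with that t0 show False by simp
  qed
  then show ?thesis unfolding bdd_above_def by blast
qed

lemma le_profile: "0 < t \<Longrightarrow> count_level t < x \<Longrightarrow> t \<le> profile x"
  unfolding profile_def by (rule cSup_upper) (auto intro: bdd_above_profile_set)

lemma profile_le: "(\<And>t. 0 < t \<Longrightarrow> count_level t < x \<Longrightarrow> t \<le> c) \<Longrightarrow> profile x \<le> c"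
  unfolding profile_def using count_level_unbounded_below[of x] by (intro cSup_least) auto

lemma less_profile_iff: "r < profile x \<longleftrightarrow> (\<exists>t>0. count_level t < x \<and> r < t)"
  unfolding profile_def using count_level_unbounded_below[of x]
  by (subst less_cSup_iff) (auto intro: bdd_above_profile_set)

lemma profile_pos: "0 < profile x"
  using less_profile_iff count_level_unbounded_below by blast

lemma mono_profile: "mono profile"
  by (intro monoI profile_le le_profile) auto

lemma le_count_level_if_profile_less: "0 < T \<Longrightarrow> profile x < T \<Longrightarrow> x \<le> count_level T"
  using le_profile[of T x] by linarith

lemma one_le_profile: "0 < x \<Longrightarrow> 1 \<le> profile x"
  using le_profile[of 1 x] count_level_one by simp

lemma profile_less_one: "profile (count_level (1/2)) < 1"
proof -
  have "t < 1/2" if "0 < t" "count_level t < count_level (1/2)" for t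
    using count_level_mono[of "1/2" t] that by linarith
  then have "profile (count_level (1/2)) \<le> 1/2" by (intro profile_le less_imp_le)
  then show ?thesis by simp
qed

lemma profile_continuous_at_left: "continuous (at_left x) profile"
  unfolding continuous_within
proof (rule tendstoI)
  fix e :: real assume "0 < e"
  then obtain t where t: "0 < t" "count_level t < x" "profile x - e < t"
    using less_profile_iff[of "profile x - e" x] by auto
  have "eventually (\<lambda>y. y \<in> {count_level t<..<x}) (at_left x)"
    using t by (intro eventually_at_left_real)
  then show "eventually (\<lambda>y. dist (profile y) (profile x) < e) (at_left x)"
  proof (rule eventually_mono)
    fix y assume y: "y \<in> {count_level t<..<x}"
    have "t \<le> profile y" using y t by (intro le_profile) auto
    moreover have "profile y \<le> profile x" using y mono_profile by (simp add: monoD)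
    ultimately show "dist (profile y) (profile x) < e" using t by (simp add: dist_real_def)
  qed
qed

lemma count_level_gap_le_bids_above:
  assumes "0 < T" "0 < t" "r < t"
  shows "ennreal (count_level T + 1 - count_level t) \<le> (\<integral>\<^sup>+\<omega>. bids_above (\<beta> \<omega>) T r \<partial>M)"
proof (cases "t \<le> T")
  case True
  have eq: "count_level T + 1 - count_level t = enn2real (expected_count t T) + 1"
    using count_level_diff[OF assms(2) True] by simp
  have "ennreal (count_level T + 1 - count_level t) = expected_count t T + 1"
    unfolding eq using expected_count_finite[OF assms(2), of T] by simp
  also have "\<dots> = (\<integral>\<^sup>+\<omega>. bid_count (\<beta> \<omega>) t T + 1 \<partial>M)"
    unfolding expected_count_def by (simp add: nn_integral_add emeasure_space_1)
  also have "\<dots> \<le> (\<integral>\<^sup>+\<omega>. bids_above (\<beta> \<omega>) T r \<partial>M)"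
    using AE_bid_sequence
    by (intro nn_integral_mono_AE) (auto elim!: eventually_mono intro: bid_count_plus_one_le_bids_above assms True)
  finally show ?thesis .
next
  case False
  let ?E = "\<integral>\<^sup>+\<omega>. bids_above (\<beta> \<omega>) T r \<partial>M"
  have "1 = (\<integral>\<^sup>+\<omega>. 1 \<partial>M)" by (simp add: emeasure_space_1)
  also have "\<dots> \<le> (\<integral>\<^sup>+\<omega>. bid_count (\<beta> \<omega>) T t + bids_above (\<beta> \<omega>) T r \<partial>M)"
    using AE_bid_sequence
    by (intro nn_integral_mono_AE) (auto elim!: eventually_mono intro: one_le_bid_count_plus_bids_above assms)
  also have "\<dots> = expected_count T t + ?E"
    unfolding expected_count_def by (rule nn_integral_add) auto
  finally have one_le: "1 \<le> expected_count T t + ?E" .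
  have fin: "expected_count T t < \<infinity>" using expected_count_finite[OF assms(1)] .
  have eq: "count_level T + 1 - count_level t = 1 - enn2real (expected_count T t)"
    using count_level_diff[OF assms(1), of t] False by simp
  have "ennreal (count_level T + 1 - count_level t) = 1 - expected_count T t"
    unfolding eq using fin by (simp add: ennreal_minus[symmetric])
  also have "\<dots> \<le> ?E" using one_le fin by (simp add: ennreal_minus_le_iff)
  finally show ?thesis .
qed

lemma emeasure_profile_superlevel_le:
  assumes "0 < T" "0 < r"
  shows "emeasure lborel {s. s \<le> count_level T + 1 \<and> r < profile s} \<le> (\<integral>\<^sup>+\<omega>. bids_above (\<beta> \<omega>) T r \<partial>M)"
proof (cases "(\<integral>\<^sup>+\<omega>. bids_above (\<beta> \<omega>) T r \<partial>M) = \<infinity>")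
  case True
  then show ?thesis by simp
next
  case False
  define y where "y = count_level T + 1"
  define e where "e = enn2real (\<integral>\<^sup>+\<omega>. bids_above (\<beta> \<omega>) T r \<partial>M)"
  have E: "(\<integral>\<^sup>+\<omega>. bids_above (\<beta> \<omega>) T r \<partial>M) = ennreal e" "0 \<le> e"
    using False by (simp_all add: e_def less_top)
  have "y - e \<le> s" if "r < profile s" for s
  proof -
    obtain t where t: "0 < t" "count_level t < s" "r < t"
      using \<open>r < profile s\<close> by (auto simp: less_profile_iff)
    have "ennreal (y - count_level t) \<le> ennreal e"
      using count_level_gap_le_bids_above[OF assms(1) t(1,3)] E by (simp add: y_def)
    then have "y - count_level t \<le> e" using E(2) by simp
    with t(2) show "y - e \<le> s" by simp
  qed
  then have "{s. s \<le> y \<and> r < profile s} \<subseteq> {y - e..y}" by auto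
  then have "emeasure lborel {s. s \<le> y \<and> r < profile s} \<le> emeasure lborel {y - e..y}"
    by (rule emeasure_mono) simp
  then show ?thesis using E by (simp add: y_def)
qed

text \<open>Both sides are areas; they are compared slice by slice at each height \<open>r > 0\<close>.\<close>
lemma nn_integral_profile_le_expected_cost:
  assumes "0 < T"
  shows "(\<integral>\<^sup>+s\<in>{..count_level T + 1}. ennreal (profile s) \<partial>lborel) \<le> (\<integral>\<^sup>+\<omega>. distinct_cost (\<beta> \<omega>) T \<partial>M)"
proof -
  define y where "y = count_level T + 1"
  note [measurable] = borel_measurable_mono[OF mono_profile]
  have [measurable]: "Measurable.pred (borel \<Otimes>\<^sub>M borel) (\<lambda>p. fst p \<in> {0<..<profile (snd p)})"
    unfolding greaterThanLessThan_iff by measurable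
  interpret pair_sigma_finite M "lborel :: real measure"
    by (intro pair_sigma_finite.intro prob_space_imp_sigma_finite prob_space_axioms sigma_finite_lborel)
  have "(\<integral>\<^sup>+s\<in>{..y}. ennreal (profile s) \<partial>lborel) =
      (\<integral>\<^sup>+s. \<integral>\<^sup>+r. indicator {..y} s * indicator {0<..<profile s} r \<partial>lborel \<partial>lborel)"
    using profile_pos by (intro nn_integral_cong) (simp add: nn_integral_cmult_indicator less_imp_le mult.commute)
  also have "\<dots> = (\<integral>\<^sup>+r. \<integral>\<^sup>+s. indicator {..y} s * indicator {0<..<profile s} r \<partial>lborel \<partial>lborel)"
    by (rule lborel_pair.Fubini') measurable
  also have "\<dots> = (\<integral>\<^sup>+r\<in>{0<..}. emeasure lborel {s. s \<le> y \<and> r < profile s} \<partial>lborel)"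
  proof (intro nn_integral_cong)
    fix r :: real
    have "(\<integral>\<^sup>+s. indicator {..y} s * indicator {0<..<profile s} r \<partial>lborel) =
        (\<integral>\<^sup>+s. indicator {0<..} r * indicator {s. s \<le> y \<and> r < profile s} s \<partial>lborel)"
      by (intro nn_integral_cong) (auto simp: indicator_def)
    also have "\<dots> = indicator {0<..} r * emeasure lborel {s. s \<le> y \<and> r < profile s}"
      by (rule nn_integral_cmult_indicator) measurable
    finally show "(\<integral>\<^sup>+s. indicator {..y} s * indicator {0<..<profile s} r \<partial>lborel) =
        emeasure lborel {s. s \<le> y \<and> r < profile s} * indicator {0<..} r"
      by (simp add: mult.commute)
  qed
  also have "\<dots> \<le> (\<integral>\<^sup>+r\<in>{0<..}. (\<integral>\<^sup>+\<omega>. bids_above (\<beta> \<omega>) T r \<partial>M) \<partial>lborel)"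
    using emeasure_profile_superlevel_le[OF assms]
    by (intro nn_integral_mono) (auto simp: y_def indicator_def)
  also have "\<dots> = (\<integral>\<^sup>+r. \<integral>\<^sup>+\<omega>. bids_above (\<beta> \<omega>) T r * indicator {0<..} r \<partial>M \<partial>lborel)"
    by (intro nn_integral_cong nn_integral_multc[symmetric]) measurable
  also have "\<dots> = (\<integral>\<^sup>+\<omega>. (\<integral>\<^sup>+r\<in>{0<..}. bids_above (\<beta> \<omega>) T r \<partial>lborel) \<partial>M)"
    by (rule Fubini') (simp add: bids_above_def)
  also have "\<dots> = (\<integral>\<^sup>+\<omega>. distinct_cost (\<beta> \<omega>) T \<partial>M)"
    using AE_bid_sequence
    by (intro nn_integral_cong_AE) (auto elim!: eventually_mono simp: nn_integral_bids_above bid_sequence_def)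
  finally show ?thesis by (simp add: y_def)
qed

lemma profile_robust: "(\<integral>\<^sup>+s\<in>{..x + 1}. ennreal (profile s) \<partial>lborel) \<le> ennreal (rho * profile x)"
proof (rule ennreal_le_epsilon)
  fix e :: real assume "0 < e"
  define T where "T = profile x + e / rho"
  have "0 < e / rho" using \<open>0 < e\<close> rho_pos by simp
  then have T: "0 < T" "profile x < T" using profile_pos[of x] by (simp_all add: T_def)
  have "(\<integral>\<^sup>+s\<in>{..x + 1}. ennreal (profile s) \<partial>lborel) \<le>
      (\<integral>\<^sup>+s\<in>{..count_level T + 1}. ennreal (profile s) \<partial>lborel)"
    using le_count_level_if_profile_less[OF T]
    by (intro nn_integral_mono) (auto simp: indicator_def)
  also have "\<dots> \<le> (\<integral>\<^sup>+\<omega>. distinct_cost (\<beta> \<omega>) T \<partial>M)"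
    by (rule nn_integral_profile_le_expected_cost[OF T(1)])
  also have "\<dots> \<le> ennreal (rho * T)" by (rule expected_distinct_cost_le[OF T(1)])
  also have "\<dots> = ennreal (rho * profile x) + ennreal e"
    using rho_pos profile_pos[of x] \<open>0 < e\<close> by (simp add: T_def field_simps flip: ennreal_plus)
  finally show "(\<integral>\<^sup>+s\<in>{..x + 1}. ennreal (profile s) \<partial>lborel) \<le> ennreal (rho * profile x) + ennreal e" .
qed

lemma profile_consistent:
  assumes "(\<integral>\<^sup>+\<omega>. distinct_cost (\<beta> \<omega>) 1 \<partial>M) \<le> ennreal chi"
  shows "(\<integral>\<^sup>+s\<in>{..1}. ennreal (profile s) \<partial>lborel) \<le> ennreal chi"
  using nn_integral_profile_le_expected_cost[of 1] assms by (simp add: count_level_one)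

lemma expected_count_window_less:
  assumes "0 < c" "0 < \<epsilon>"
  shows "\<exists>\<delta>>0. \<delta> < c \<and> expected_count (c - \<delta>) (c + \<delta>) < ennreal (1 + \<epsilon>)"
proof -
  define \<delta> where "\<delta> k = c / (real k + 2)" for k
  have \<delta>: "0 < \<delta> k" "\<delta> k < c" for k
  proof -
    show "0 < \<delta> k" using assms(1) by (simp add: \<delta>_def)
    have "\<delta> k \<le> c / 2" unfolding \<delta>_def using assms(1) by (intro divide_left_mono) auto
    then show "\<delta> k < c" using assms(1) by simp
  qed
  have "(INF k. expected_count (c - \<delta> k) (c + \<delta> k)) = (\<integral>\<^sup>+\<omega>. (INF k. bid_count (\<beta> \<omega>) (c - \<delta> k) (c + \<delta> k)) \<partial>M)"
    unfolding expected_count_def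
  proof (rule nn_integral_monotone_convergence_INF_AE'[symmetric])
    have "\<delta> (Suc k) \<le> \<delta> k" for k
      unfolding \<delta>_def using assms(1) by (intro divide_left_mono) auto
    then show "AE \<omega> in M. bid_count (\<beta> \<omega>) (c - \<delta> (Suc k)) (c + \<delta> (Suc k)) \<le> bid_count (\<beta> \<omega>) (c - \<delta> k) (c + \<delta> k)" for k
      by (intro AE_I2 bid_count_mono) auto
    show "(\<integral>\<^sup>+\<omega>. bid_count (\<beta> \<omega>) (c - \<delta> 0) (c + \<delta> 0) \<partial>M) < \<infinity>"
      using expected_count_finite[of "c - \<delta> 0"] \<delta>[of 0] by (simp add: expected_count_def)
  qed simp
  also have "\<dots> \<le> (\<integral>\<^sup>+\<omega>. 1 \<partial>M)"
    using AE_bid_sequence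
    by (intro nn_integral_mono_AE) (auto elim!: eventually_mono simp: \<delta>_def intro: INF_bid_count_windows_le_one assms(1))
  also have "\<dots> < ennreal (1 + \<epsilon>)" using assms(2) by (simp add: emeasure_space_1)
  finally obtain k where "expected_count (c - \<delta> k) (c + \<delta> k) < ennreal (1 + \<epsilon>)"
    unfolding INF_less_iff by blast
  then show ?thesis using \<delta> by blast
qed

text \<open>Almost surely at most one bid equals \<open>c\<close>, so the expected count grows by less than
  \<open>y - x\<close> across \<open>c\<close>.\<close>
lemma profile_gap:
  assumes "x + 1 < y"
  shows "profile x < profile y"
proof (rule ccontr)
  assume "\<not> profile x < profile y"
  moreover have "profile x \<le> profile y" using mono_profile assms by (simp add: monoD)
  ultimately have eq: "profile y = profile x" by simp
  define c where "c = profile x"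
  have "0 < c" using profile_pos by (simp add: c_def)
  then obtain \<delta> where \<delta>: "0 < \<delta>" "\<delta> < c" "expected_count (c - \<delta>) (c + \<delta>) < y - x"
    using expected_count_window_less[of c "y - x - 1"] assms by auto
  obtain t where t: "0 < t" "count_level t < x" "c - \<delta> < t"
    using less_profile_iff[of "c - \<delta>" x] \<delta>(1) by (auto simp: c_def)
  have "t \<le> c" using le_profile[OF t(1,2)] by (simp add: c_def)
  have "y \<le> count_level (c + \<delta>)"
    using le_count_level_if_profile_less[of "c + \<delta>" y] \<open>0 < c\<close> \<delta>(1) eq by (simp add: c_def)
  have "expected_count t (c + \<delta>) \<le> expected_count (c - \<delta>) (c + \<delta>)"
    using t(3) by (intro expected_count_mono) auto
  then have "expected_count t (c + \<delta>) < ennreal (y - x)"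
    using \<delta>(3) by (rule le_less_trans)
  then have "enn2real (expected_count t (c + \<delta>)) < y - x"
    using expected_count_finite[OF t(1)] by simp
  moreover have "count_level (c + \<delta>) - count_level t = enn2real (expected_count t (c + \<delta>))"
    using \<open>t \<le> c\<close> \<delta>(1) by (intro count_level_diff t(1)) simp
  ultimately show False using \<open>y \<le> count_level (c + \<delta>)\<close> t(2) by linarith
qed

lemma exists_gapped_bidding_profile:
  assumes "(\<integral>\<^sup>+\<omega>. distinct_cost (\<beta> \<omega>) 1 \<partial>M) \<le> ennreal chi"
  shows "\<exists>G. bidding_profile rho chi G \<and> (\<forall>x y. x + 1 < y \<longrightarrow> G x < G y)"
proof -
  obtain a where "bidding_profile rho chi (\<lambda>x. profile (x + a))"
    using mono_profile profile_continuous_at_left profile_pos profile_robust profile_consistent[OF assms]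
      one_le_profile profile_less_one
    by (rule bidding_profile_shift)
  moreover have "\<forall>x y. x + 1 < y \<longrightarrow> profile (x + a) < profile (y + a)"
    by (auto intro: profile_gap)
  ultimately show ?thesis by blast
qed

end

lemma rand_strategy_imp_robust_random_bids:
  assumes "rand_strategy B" "robust rho B" "0 < rho"
  shows "robust_random_bids B (\<lambda>b. b) rho"
proof -
  have "prob_space B" and sets: "sets B = sets (Pi\<^sub>M UNIV (\<lambda>_. borel))" and AE: "AE b in B. det_strategy b"
    using assms(1) unfolding rand_strategy_def by auto
  moreover have "robust_random_bids_axioms B (\<lambda>b. b) rho"
  proof
    show "(\<lambda>b. b n) \<in> borel_measurable B" for n
      by (subst measurable_cong_sets[OF sets refl]) simp
    show "AE b in B. bid_sequence b"
      using AE by eventually_elim (simp add: det_strategy_iff_strict_bid_sequence)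
    show "0 < rho" by (rule assms(3))
    show "(\<integral>\<^sup>+b. distinct_cost b T \<partial>B) \<le> ennreal (rho * T)" if "0 < T" for T
      using assms(2) that unfolding robust_def by (simp add: rand_cost_eq_distinct_cost[OF assms(1)])
  qed
  ultimately show ?thesis by (intro robust_random_bids.intro)
qed

section \<open>The randomized strategy of a bidding profile\<close>

definition shift_bids :: "(real \<Rightarrow> real) \<Rightarrow> real \<Rightarrow> int \<Rightarrow> real" where
  "shift_bids G u n = G (real_of_int n + u)"

lemma bid_sequence_shift_bids:
  assumes "bidding_profile rho chi G"
  shows "bid_sequence (shift_bids G u)"
  unfolding bid_sequence_def
proof (intro conjI allI impI)
  have mono: "mono G" and pos: "\<And>x. 0 < G x" using assms unfolding bidding_profile_def by auto
  show "0 < shift_bids G u n" for n by (simp add: shift_bids_def pos)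
  show "mono (shift_bids G u)" unfolding shift_bids_def by (intro monoI monoD[OF mono]) simp
  fix T :: real assume "0 < T"
  obtain x where x: "T \<le> G x" using bidding_profile_unbounded[OF assms] by blast
  have "G x \<le> G (real_of_int \<lceil>x - u\<rceil> + u)" by (rule monoD[OF mono]) linarith
  with x have "T \<le> shift_bids G u \<lceil>x - u\<rceil>" by (simp add: shift_bids_def)
  then show "\<exists>n. T \<le> shift_bids G u n" ..
  obtain y where y: "G y < T" using bidding_profile_ex_less[OF assms \<open>0 < T\<close>] by blast
  have "G (real_of_int \<lfloor>y - u\<rfloor> + u) \<le> G y" by (rule monoD[OF mono]) linarith
  with y have "shift_bids G u \<lfloor>y - u\<rfloor> < T" by (simp add: shift_bids_def)
  then show "\<exists>n. shift_bids G u n < T" ..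
qed

lemma nn_integral_distinct_cost_shift_bids_le:
  fixes G :: "real \<Rightarrow> real"
  assumes mono: "mono G" and a: "\<And>x. G x < T \<Longrightarrow> x \<le> a"
  shows "(\<integral>\<^sup>+u\<in>{0<..1}. distinct_cost (shift_bids G u) T \<partial>lborel)
     \<le> (\<integral>\<^sup>+s\<in>{..a + 1}. ennreal (G s) \<partial>lborel)"
proof -
  note [measurable] = borel_measurable_mono[OF mono]
  have "distinct_cost (shift_bids G u) T \<le>
      (\<integral>\<^sup>+n. ennreal (G (real_of_int n + u)) * indicator {..a + 1} (real_of_int n + u) \<partial>count_space UNIV)" for u
    unfolding distinct_cost_def shift_bids_def
  proof (intro nn_integral_mono)
    fix n
    have "real_of_int n + u \<le> a + 1" if "G (real_of_int (n - 1) + u) < T"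
      using a[OF that] by simp
    then show "ennreal (G (real_of_int n + u)) * indicator {n. G (real_of_int (n - 1) + u) < G (real_of_int n + u) \<and> G (real_of_int (n - 1) + u) < T} n
        \<le> ennreal (G (real_of_int n + u)) * indicator {..a + 1} (real_of_int n + u)"
      by (auto simp: indicator_def)
  qed
  then have "(\<integral>\<^sup>+u\<in>{0<..1}. distinct_cost (shift_bids G u) T \<partial>lborel) \<le>
      (\<integral>\<^sup>+u\<in>{0<..1}. (\<integral>\<^sup>+n. ennreal (G (real_of_int n + u)) * indicator {..a + 1} (real_of_int n + u) \<partial>count_space UNIV) \<partial>lborel)"
    by (intro nn_integral_mono mult_right_mono) auto
  also have "\<dots> = (\<integral>\<^sup>+s\<in>{..a + 1}. ennreal (G s) \<partial>lborel)"
    by (rule nn_integral_unit_shifts) measurable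
  finally show ?thesis .
qed

lemma expected_shift_cost_robust:
  assumes prof: "bidding_profile rho chi G" and "0 < T" "0 < rho"
  shows "(\<integral>\<^sup>+u\<in>{0<..1}. distinct_cost (shift_bids G u) T \<partial>lborel) \<le> ennreal (rho * T)"
proof -
  have mono: "mono G"
    and rob: "\<And>x. (\<integral>\<^sup>+t\<in>{..x + 1}. ennreal (G t) \<partial>lborel) \<le> ennreal (rho * G x)"
    using prof unfolding bidding_profile_def by auto
  obtain a where a: "G a \<le> T" "\<And>x. G x < T \<Longrightarrow> x \<le> a"
    using bidding_profile_level[OF prof \<open>0 < T\<close>] by blast
  have "(\<integral>\<^sup>+u\<in>{0<..1}. distinct_cost (shift_bids G u) T \<partial>lborel) \<le> (\<integral>\<^sup>+s\<in>{..a + 1}. ennreal (G s) \<partial>lborel)"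
    using mono a(2) by (rule nn_integral_distinct_cost_shift_bids_le)
  also have "\<dots> \<le> ennreal (rho * G a)" by (rule rob)
  also have "\<dots> \<le> ennreal (rho * T)" using a(1) \<open>0 < rho\<close> by (intro ennreal_leI mult_left_mono) auto
  finally show ?thesis .
qed

lemma expected_shift_cost_consistent:
  assumes prof: "bidding_profile rho chi G"
  shows "(\<integral>\<^sup>+u\<in>{0<..1}. distinct_cost (shift_bids G u) 1 \<partial>lborel) \<le> ennreal chi"
proof -
  have mono: "mono G" and offset: "\<And>x. 0 < x \<Longrightarrow> 1 \<le> G x"
    and con: "(\<integral>\<^sup>+t\<in>{..1}. ennreal (G t) \<partial>lborel) \<le> ennreal chi"
    using prof unfolding bidding_profile_def by auto
  have "x \<le> 0" if "G x < 1" for x using offset[of x] that by linarith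
  then have "(\<integral>\<^sup>+u\<in>{0<..1}. distinct_cost (shift_bids G u) 1 \<partial>lborel) \<le> (\<integral>\<^sup>+s\<in>{..0 + 1}. ennreal (G s) \<partial>lborel)"
    using mono by (intro nn_integral_distinct_cost_shift_bids_le)
  with con show ?thesis by simp
qed

lemma robust_random_bids_shift_bids:
  assumes prof: "bidding_profile rho chi G" and "0 < rho"
  shows "robust_random_bids (uniform_measure lborel {0<..1}) (shift_bids G) rho"
proof -
  have mono: "mono G" using prof unfolding bidding_profile_def by auto
  note [measurable] = borel_measurable_mono[OF mono]
  have "prob_space (uniform_measure lborel {0<..1 :: real})" by (rule prob_space_uniform_measure) auto
  moreover have "robust_random_bids_axioms (uniform_measure lborel {0<..1}) (shift_bids G) rho"
  proof
    show "(\<lambda>u. shift_bids G u n) \<in> borel_measurable (uniform_measure lborel {0<..1})" for n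
      unfolding shift_bids_def by measurable
    show "AE u in uniform_measure lborel {0<..1}. bid_sequence (shift_bids G u)"
      using bid_sequence_shift_bids[OF prof] by simp
    show "0 < rho" by (rule assms(2))
    fix T :: real assume "0 < T"
    have "(\<integral>\<^sup>+u. distinct_cost (shift_bids G u) T \<partial>uniform_measure lborel {0<..1}) =
        (\<integral>\<^sup>+u\<in>{0<..1}. distinct_cost (shift_bids G u) T \<partial>lborel)"
      by (rule nn_integral_uniform_unit) (simp add: distinct_cost_def shift_bids_def)
    also have "\<dots> \<le> ennreal (rho * T)" using prof \<open>0 < T\<close> assms(2) by (rule expected_shift_cost_robust)
    finally show "(\<integral>\<^sup>+u. distinct_cost (shift_bids G u) T \<partial>uniform_measure lborel {0<..1}) \<le> ennreal (rho * T)" .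
  qed
  ultimately show ?thesis by (rule robust_random_bids.intro)
qed

text \<open>The profile of the random shifts of \<open>G\<close> has the gap property, which \<open>G\<close> itself may lack.\<close>
lemma bidding_profile_imp_gapped:
  assumes prof: "bidding_profile rho chi G" and "0 < rho"
  shows "\<exists>G'. bidding_profile rho chi G' \<and> (\<forall>x y. x + 1 < y \<longrightarrow> G' x < G' y)"
proof -
  interpret robust_random_bids "uniform_measure lborel {0<..1}" "shift_bids G" rho
    using assms by (rule robust_random_bids_shift_bids)
  have mono: "mono G" using prof unfolding bidding_profile_def by auto
  note [measurable] = borel_measurable_mono[OF mono]
  have "(\<integral>\<^sup>+u. distinct_cost (shift_bids G u) 1 \<partial>uniform_measure lborel {0<..1}) \<le> ennreal chi"
    using expected_shift_cost_consistent[OF prof]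
    by (subst nn_integral_uniform_unit) (simp_all add: distinct_cost_def shift_bids_def)
  then show ?thesis by (rule exists_gapped_bidding_profile)
qed

lemma countable_flat_unit_steps:
  fixes G :: "real \<Rightarrow> real"
  assumes mono: "mono G" and gap: "\<And>x y. x + 1 < y \<Longrightarrow> G x < G y"
  shows "countable {x. G (x + 1) \<le> G x}"
proof -
  let ?S = "{x. G (x + 1) \<le> G x}"
  have flat: "G (x + 1) = G x" if "x \<in> ?S" for x
    using that monoD[OF mono, of x "x + 1"] by simp
  have "inj_on floor ?S"
  proof (rule inj_onI)
    fix x y assume x: "x \<in> ?S" and y: "y \<in> ?S" and "\<lfloor>x\<rfloor> = \<lfloor>y\<rfloor>"
    then have close: "\<bar>x - y\<bar> < 1" by linarith
    have False if "x < y" "x \<in> ?S" "y \<in> ?S" "\<bar>x - y\<bar> < 1" for x y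
    proof -
      have "G y \<le> G (x + 1)" using that mono by (simp add: monoD)
      then have "G (y + 1) \<le> G x" using flat[OF that(2)] flat[OF that(3)] by simp
      moreover have "G x < G (y + 1)" using that(1) by (intro gap) simp
      ultimately show False by simp
    qed
    then show "x = y" using x y close by (metis abs_minus_commute linorder_neqE_linordered_idom)
  qed
  then show ?thesis by (rule countable_image_inj_on[rotated]) simp
qed

lemma AE_strict_mono_shift_bids:
  fixes G :: "real \<Rightarrow> real"
  assumes mono: "mono G" and gap: "\<And>x y. x + 1 < y \<Longrightarrow> G x < G y"
  shows "AE u in lborel. strict_mono (shift_bids G u)"
proof (rule AE_I')
  let ?N = "\<Union>n::int. (\<lambda>x. x - real_of_int n) ` {x. G (x + 1) \<le> G x}"
  show "?N \<in> null_sets lborel"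
    using countable_flat_unit_steps[OF assms] by (intro countable_imp_null_set_lborel) auto
  show "{u \<in> space lborel. \<not> strict_mono (shift_bids G u)} \<subseteq> ?N"
  proof safe
    fix u assume "\<not> strict_mono (shift_bids G u)"
    then obtain n where "\<not> G (real_of_int n + u) < G (real_of_int n + u + 1)"
      using strict_mono_if_less_succ[of "shift_bids G u"] by (auto simp: shift_bids_def add_ac)
    then have "real_of_int n + u \<in> {x. G (x + 1) \<le> G x}" by simp
    then show "u \<in> ?N" by (auto intro!: image_eqI[of u _ "real_of_int n + u"])
  qed
qed

lemma AE_det_strategy_shift_bids:
  assumes prof: "bidding_profile rho chi G" and gap: "\<And>x y. x + 1 < y \<Longrightarrow> G x < G y"
  shows "AE u in uniform_measure lborel {0<..1}. det_strategy (shift_bids G u)"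
proof (rule AE_uniform_measureI)
  have mono: "mono G" using prof unfolding bidding_profile_def by auto
  show "AE u in lborel. u \<in> {0<..1} \<longrightarrow> det_strategy (shift_bids G u)"
    using AE_strict_mono_shift_bids[OF mono gap]
  proof (rule eventually_mono)
    fix u assume "strict_mono (shift_bids G u)"
    then show "u \<in> {0<..1} \<longrightarrow> det_strategy (shift_bids G u)"
      using bid_sequence_shift_bids[OF prof, of u] by (simp add: det_strategy_iff_strict_bid_sequence)
  qed
qed simp

lemma gapped_profile_imp_strategy:
  assumes prof: "bidding_profile rho chi G" and gap: "\<And>x y. x + 1 < y \<Longrightarrow> G x < G y" and "0 < rho"
  shows "\<exists>B. rand_strategy B \<and> robust rho B \<and> consistent chi B"
proof -
  interpret robust_random_bids "uniform_measure lborel {0<..1}" "shift_bids G" rho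
    using prof \<open>0 < rho\<close> by (rule robust_random_bids_shift_bids)
  have mono: "mono G" using prof unfolding bidding_profile_def by auto
  note [measurable] = borel_measurable_mono[OF mono]
  define B where "B = distr (uniform_measure lborel {0<..1}) (Pi\<^sub>M UNIV (\<lambda>_. borel)) (shift_bids G)"
  have meas: "shift_bids G \<in> uniform_measure lborel {0<..1} \<rightarrow>\<^sub>M Pi\<^sub>M UNIV (\<lambda>_. borel)"
    by (rule measurable_PiM_single') (auto simp: shift_bids_def)
  have "AE u in uniform_measure lborel {0<..1}. det_strategy (shift_bids G u)"
    using prof gap by (rule AE_det_strategy_shift_bids)
  then have "AE b in B. det_strategy b" unfolding B_def by (simp add: AE_distr_iff[OF meas])
  then have strat: "rand_strategy B"
    unfolding rand_strategy_def B_def using meas by (auto intro: prob_space_distr)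
  have cost: "rand_cost B T = (\<integral>\<^sup>+u. distinct_cost (shift_bids G u) T \<partial>uniform_measure lborel {0<..1})"
    if "0 < T" for T
    unfolding rand_cost_eq_distinct_cost[OF strat that] unfolding B_def
    by (rule nn_integral_distr[OF meas]) (simp add: distinct_cost_def)
  have "robust rho B"
    unfolding robust_def using cost expected_distinct_cost_le by simp
  moreover have "consistent chi B"
    unfolding consistent_def cost[OF zero_less_one] using expected_shift_cost_consistent[OF prof]
    by (subst nn_integral_uniform_unit) (simp_all add: distinct_cost_def shift_bids_def)
  ultimately show ?thesis using strat by blast
qed

theorem lemma3:
  fixes rho chi :: real
  assumes "1 < chi" and "chi < rho"
  shows "(\<exists>B. rand_strategy B \<and> robust rho B \<and> consistent chi B) \<longleftrightarrow>
         (\<exists>G. bidding_profile rho chi G)"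
proof -
  have "0 < rho" using assms by simp
  show ?thesis
  proof
    assume "\<exists>B. rand_strategy B \<and> robust rho B \<and> consistent chi B"
    then obtain B where B: "rand_strategy B" "robust rho B" "consistent chi B" by blast
    interpret robust_random_bids B "\<lambda>b. b" rho
      using B(1,2) \<open>0 < rho\<close> by (rule rand_strategy_imp_robust_random_bids)
    have "(\<integral>\<^sup>+b. distinct_cost b 1 \<partial>B) \<le> ennreal chi"
      using B(3) unfolding consistent_def by (simp add: rand_cost_eq_distinct_cost[OF B(1)])
    then show "\<exists>G. bidding_profile rho chi G"
      using exists_gapped_bidding_profile by blast
  next
    assume "\<exists>G. bidding_profile rho chi G"
    then obtain G where "bidding_profile rho chi G" by blast
    then obtain G' where "bidding_profile rho chi G'" "\<And>x y. x + 1 < y \<Longrightarrow> G' x < G' y"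
      using bidding_profile_imp_gapped \<open>0 < rho\<close> by blast
    then show "\<exists>B. rand_strategy B \<and> robust rho B \<and> consistent chi B"
      using gapped_profile_imp_strategy \<open>0 < rho\<close> by blast
  qed
qed

end
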